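(* For every dimension $d$ and integers $t\ge 2$, $k\ge 1$, $h\ge 1$ there exists an integer $m=m(t,k,h)$ (depending only on $t,k,h$) with the following property: for every finite family $\mathcal{H}$ of $h$ halfspaces in $\mathbb{R}^d$, the (unordered) $t$-tuples of every finite set of points $S\subset\mathbb{R}^d$ can be $k$-colored such that every $\mathcal{H}$-region that contains at least $m$ points of $S$ contains a $t$-tuple of points of $S$ of each of the $k$ colors.
   Context: Given a finite family of halfspaces $\mathcal{H}=\{H_1,\dots,H_h\}$ in $\mathbb{R}^d$, a region $R$ is an $\mathcal{H}$-region if it is the intersection of finitely many halfspaces, each of which is a translate of one of the halfspaces in $\mathcal{H}$. A $t$-tuple of points of $S$ is a $t$-element subset of $S$; a region contains a $t$-tuple if it contains all its points. *)

theory Defs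
  imports Complex_Main
begin

text \<open>R^d is represented explicitly (so that m can be chosen independently of d):
  points are functions nat => real vanishing outside {..<d}.\<close>

definition Rspace :: "nat \<Rightarrow> (nat \<Rightarrow> real) set" where
  "Rspace d = {x. \<forall>i\<ge>d. x i = 0}"

definition dotd :: "nat \<Rightarrow> (nat \<Rightarrow> real) \<Rightarrow> (nat \<Rightarrow> real) \<Rightarrow> real" where
  "dotd d a x = (\<Sum>i<d. a i * x i)"

definition is_halfspace :: "nat \<Rightarrow> (nat \<Rightarrow> real) set \<Rightarrow> bool" where
  "is_halfspace d H \<longleftrightarrow> (\<exists>a b. a \<in> Rspace d \<and> a \<noteq> (\<lambda>_. 0) \<and>
      H = {x \<in> Rspace d. dotd d a x \<le> b})"

definition translate :: "(nat \<Rightarrow> real) \<Rightarrow> (nat \<Rightarrow> real) set \<Rightarrow> (nat \<Rightarrow> real) set" where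
  "translate v H = (\<lambda>x i. x i + v i) ` H"

definition is_region :: "nat \<Rightarrow> nat \<Rightarrow> (nat \<Rightarrow> (nat \<Rightarrow> real) set) \<Rightarrow> (nat \<Rightarrow> real) set \<Rightarrow> bool" where
  "is_region d h Hs R \<longleftrightarrow> (\<exists>F. finite F \<and> F \<noteq> {} \<and>
      (\<forall>G\<in>F. \<exists>i<h. \<exists>v\<in>Rspace d. G = translate v (Hs i)) \<and> R = \<Inter>F)"

end

theory Submission
  imports Defs "HOL-Library.Ramsey"
begin

(* Write the halfspaces as a_i . x <= b_i. A region containing p and q contains every point x
   dominated by p and q, i.e. with a_i . x <= max (a_i . p) (a_i . q) for all i, so regions meet S
   in dominance-closed sets; nothing else about regions is used.

   Order the points. For a point p, the relation "p < x < y and x is dominated by p and y" is a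
   strict partial order, and a t-tuple with least element p is coloured by the largest height of
   its other points in this order. Ramsey's theorem for pairs, a pair x < y being coloured by the
   set of i with a_i . x <= a_i . y, yields in every large set a point p followed by a chain of
   t + k - 1 points, whose top q thus has height at least t + k - 2. Every smaller height is
   attained below q, by points dominated by p and q and hence in the same closed set; taking
   heights 0, ..., t - 3 together with t - 2 + j gives a tuple of colour j. *)

section \<open>Heights in a strict partial order\<close>

lemma sorted_wrt_irreflp_imp_distinct:
  assumes "irreflp R" and "sorted_wrt R xs"
  shows "distinct xs"
  using assms(2) by (induction xs) (use assms(1) in \<open>auto simp: irreflp_def\<close>)

definition chain_height :: "('a \<Rightarrow> 'a \<Rightarrow> bool) \<Rightarrow> 'a set \<Rightarrow> 'a \<Rightarrow> nat" where
  "chain_height prec P q = Max (length ` {xs. set xs \<subseteq> P \<and> sorted_wrt prec (xs @ [q])})"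

context
  fixes prec :: "'a \<Rightarrow> 'a \<Rightarrow> bool" and P :: "'a set"
  assumes finite_P: "finite P" and irreflp_prec: "irreflp prec" and transp_prec: "transp prec"
begin

lemma finite_chains_ending_at: "finite {xs. set xs \<subseteq> P \<and> sorted_wrt prec (xs @ [q])}"
proof (rule finite_subset[OF _ finite_subset_distinct[OF finite_P]])
  show "{xs. set xs \<subseteq> P \<and> sorted_wrt prec (xs @ [q])} \<subseteq> {xs. set xs \<subseteq> P \<and> distinct xs}"
    using sorted_wrt_irreflp_imp_distinct[OF irreflp_prec] by (auto simp: sorted_wrt_append)
qed

lemma chain_height_ge:
  assumes "set xs \<subseteq> P" and "sorted_wrt prec (xs @ [q])"
  shows "length xs \<le> chain_height prec P q"
  unfolding chain_height_def using assms finite_chains_ending_at by (intro Max_ge) auto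

lemma longest_chain_ending_at:
  obtains xs where "set xs \<subseteq> P" "sorted_wrt prec (xs @ [q])" "length xs = chain_height prec P q"
proof -
  have "chain_height prec P q \<in> length ` {xs. set xs \<subseteq> P \<and> sorted_wrt prec (xs @ [q])}"
    unfolding chain_height_def using finite_chains_ending_at[of q]
    by (intro Max_in) (auto intro!: exI[of _ "[]"])
  then obtain xs where "set xs \<subseteq> P" "sorted_wrt prec (xs @ [q])" "chain_height prec P q = length xs"
    by blast
  then show ?thesis
    using that by simp
qed

lemma chain_height_last_ge:
  assumes "set xs \<subseteq> P" and "sorted_wrt prec xs" and "xs \<noteq> []"
  shows "length xs - 1 \<le> chain_height prec P (last xs)"
proof -
  have "set (butlast xs) \<subseteq> P"
    using assms(1) in_set_butlastD by fastforce
  moreover have "sorted_wrt prec (butlast xs @ [last xs])"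
    using assms(2,3) by simp
  ultimately show ?thesis
    using chain_height_ge by fastforce
qed

lemma chain_height_nth_of_longest_chain:
  assumes chain: "set xs \<subseteq> P" "sorted_wrt prec (xs @ [q])"
    and longest: "length xs = chain_height prec P q"
    and j: "j < length xs"
  shows "chain_height prec P (xs ! j) = j"
proof (rule antisym)
  \<comment> \<open>A longer chain ending at xs ! j, spliced into xs, would beat the longest chain.\<close>
  obtain ys where ys: "set ys \<subseteq> P" "sorted_wrt prec (ys @ [xs ! j])"
    "length ys = chain_height prec P (xs ! j)"
    using longest_chain_ending_at .
  have drop_j: "drop j xs @ [q] = xs ! j # (drop (Suc j) xs @ [q])"
    using j by (simp add: Cons_nth_drop_Suc)
  have "drop j (xs @ [q]) = drop j xs @ [q]"
    using j by simp
  then have "sorted_wrt prec (drop j xs @ [q])"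
    using sorted_wrt_drop[OF chain(2), of j] by metis
  moreover have "prec y z" if "y \<in> set ys" and "z \<in> set (drop j xs @ [q])" for y z
  proof -
    have "prec y (xs ! j)"
      using ys(2) that(1) by (simp add: sorted_wrt_append)
    moreover have "z = xs ! j \<or> prec (xs ! j) z"
      using \<open>sorted_wrt prec (drop j xs @ [q])\<close> that(2) unfolding drop_j by auto
    ultimately show ?thesis
      using transpD[OF transp_prec] by blast
  qed
  ultimately have "sorted_wrt prec ((ys @ drop j xs) @ [q])"
    using ys(2) by (simp add: sorted_wrt_append)
  moreover have "set (ys @ drop j xs) \<subseteq> P"
    using ys(1) chain(1) set_drop_subset by fastforce
  ultimately have "length (ys @ drop j xs) \<le> chain_height prec P q"
    by (rule chain_height_ge[rotated])
  then show "chain_height prec P (xs ! j) \<le> j"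
    using ys(3) longest j by simp
next
  have "take (Suc j) (xs @ [q]) = take j xs @ [xs ! j]"
    using j by (simp add: take_Suc_conv_app_nth)
  then have "sorted_wrt prec (take j xs @ [xs ! j])"
    using sorted_wrt_take[OF chain(2), of "Suc j"] by metis
  then show "j \<le> chain_height prec P (xs ! j)"
    using chain_height_ge[of "take j xs"] chain(1) j set_take_subset by fastforce
qed

lemma chain_height_attained_below:
  assumes "j \<le> chain_height prec P q"
  obtains r where "r = q \<or> r \<in> P \<and> prec r q" and "chain_height prec P r = j"
proof -
  obtain xs where xs: "set xs \<subseteq> P" "sorted_wrt prec (xs @ [q])" "length xs = chain_height prec P q"
    using longest_chain_ending_at .
  show ?thesis
  proof (cases "j = chain_height prec P q")
    case False
    with assms xs(3) have j: "j < length xs" by simp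
    then have "xs ! j \<in> P \<and> prec (xs ! j) q"
      using xs(1,2) nth_mem by (fastforce simp: sorted_wrt_append)
    with that show ?thesis using chain_height_nth_of_longest_chain[OF xs j] by blast
  qed (use that in blast)
qed

end

section \<open>Ramsey's theorem for finite sets and finitely many colours\<close>

lemma finite_ramsey:
  fixes C :: "'c set"
  assumes "finite C"
  obtains N where "\<And>(U :: 'a set) f. finite U \<Longrightarrow> N \<le> card U \<Longrightarrow> f \<in> [U]\<^bsup>r\<^esup> \<rightarrow> C \<Longrightarrow>
    \<exists>H\<subseteq>U. card H = L \<and> (\<exists>c. f ` [H]\<^bsup>r\<^esup> \<subseteq> {c})"
proof -
  obtain code where code: "bij_betw code C {0..<card C}"
    using ex_bij_betw_finite_nat[OF assms] by blast
  obtain N :: nat where N: "partn_lst {..<N} (replicate (card C) L) r"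
    using ramsey_full by blast
  show ?thesis
  proof (rule that)
    fix U :: "'a set" and f
    assume U: "finite U" "N \<le> card U" and f: "f \<in> [U]\<^bsup>r\<^esup> \<rightarrow> C"
    obtain U0 where U0: "U0 \<subseteq> U" "card U0 = N"
      using obtain_subset_with_card_n[OF U(2)] by blast
    obtain e where e: "bij_betw e {..<N} U0"
      using ex_bij_betw_nat_finite[of U0] U0 finite_subset[OF _ U(1)] by (auto simp: atLeast0LessThan)
    have "(\<lambda>X. e ` X) \<in> [{..<N}]\<^bsup>r\<^esup> \<rightarrow> [U]\<^bsup>r\<^esup>"
      using bij_betw_imp_funcset[OF bij_betw_nsets[OF e]] nsets_mono[OF U0(1)] by blast
    then have "(\<lambda>X. code (f (e ` X))) \<in> [{..<N}]\<^bsup>r\<^esup> \<rightarrow> {..<card C}"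
      using f bij_betw_imp_funcset[OF code] by (auto simp: Pi_iff)
    then obtain i H' where H': "H' \<in> [{..<N}]\<^bsup>L\<^esup>"
      and hom: "(\<lambda>X. code (f (e ` X))) ` [H']\<^bsup>r\<^esup> \<subseteq> {i}"
      using partn_lstE[OF N] by (metis length_replicate nth_replicate)
    have inj_e: "inj_on e H'"
      using e H' by (auto simp: bij_betw_def nsets_def intro: inj_on_subset)
    have HU: "e ` H' \<subseteq> U"
      using e H' U0(1) by (auto simp: bij_betw_def nsets_def)
    have "f Y = inv_into C code i" if Y: "Y \<in> [e ` H']\<^bsup>r\<^esup>" for Y
    proof -
      obtain X where X: "X \<in> [H']\<^bsup>r\<^esup>" "Y = e ` X"
        using nset_image_obtains[OF Y inj_e] .
      have "f Y \<in> C"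
        using funcset_mem[OF f subsetD[OF nsets_mono[OF HU] Y]] .
      moreover have "code (f Y) = i"
        using hom X by (simp add: image_subset_iff)
      ultimately show ?thesis
        using code by (auto simp: bij_betw_def)
    qed
    then show "\<exists>H\<subseteq>U. card H = L \<and> (\<exists>c. f ` [H]\<^bsup>r\<^esup> \<subseteq> {c})"
      using HU H' inj_e by (intro exI[of _ "e ` H'"]) (auto simp: card_image nsets_def)
  qed
qed

section \<open>Colouring tuples of points by heights\<close>

definition dominated :: "nat \<Rightarrow> (nat \<Rightarrow> 'a \<Rightarrow> real) \<Rightarrow> 'a \<Rightarrow> 'a \<Rightarrow> 'a \<Rightarrow> bool" where
  "dominated h g p q x \<longleftrightarrow> (\<forall>i<h. g i x \<le> max (g i p) (g i q))"

definition dominance_closed :: "nat \<Rightarrow> (nat \<Rightarrow> 'a \<Rightarrow> real) \<Rightarrow> 'a set \<Rightarrow> 'a set \<Rightarrow> bool" where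
  "dominance_closed h g P U \<longleftrightarrow> (\<forall>p\<in>U. \<forall>q\<in>U. \<forall>x\<in>P. dominated h g p q x \<longrightarrow> x \<in> U)"

definition dom_below :: "nat \<Rightarrow> (nat \<Rightarrow> 'a::linorder \<Rightarrow> real) \<Rightarrow> 'a \<Rightarrow> 'a \<Rightarrow> 'a \<Rightarrow> bool" where
  "dom_below h g p x y \<longleftrightarrow> p < x \<and> x < y \<and> dominated h g p y x"

lemma irreflp_dom_below: "irreflp (dom_below h g p)"
  by (simp add: irreflp_def dom_below_def)

lemma transp_dom_below: "transp (dom_below h g p)"
  by (rule transpI) (force simp: dom_below_def dominated_def)

(* The heights 0, ..., t - 3 only pad the tuple; the largest height, shifted down by t - 2,
   selects the colour. *)
definition tuple_colour ::
    "nat \<Rightarrow> (nat \<Rightarrow> 'a::linorder \<Rightarrow> real) \<Rightarrow> 'a set \<Rightarrow> nat \<Rightarrow> nat \<Rightarrow> 'a set \<Rightarrow> nat" where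
  "tuple_colour h g P t k T =
     (Max (chain_height (dom_below h g (Min T)) P ` (T - {Min T})) - (t - 2)) mod k"

lemma large_set_has_long_dom_below_chain:
  obtains N where "\<And>(U :: 'a::linorder set) g. finite U \<Longrightarrow> N \<le> card U \<Longrightarrow>
    \<exists>p\<in>U. \<exists>xs. set xs \<subseteq> U \<and> sorted_wrt (dom_below h g p) xs \<and> length xs = n"
proof -
  obtain N where N: "\<And>(U :: 'a set) f. finite U \<Longrightarrow> N \<le> card U \<Longrightarrow> f \<in> [U]\<^bsup>2\<^esup> \<rightarrow> Pow {..<h} \<Longrightarrow>
      \<exists>H\<subseteq>U. card H = Suc n \<and> (\<exists>c. f ` [H]\<^bsup>2\<^esup> \<subseteq> {c})"
    by (rule finite_ramsey[where C = "Pow {..<h}" and r = 2 and L = "Suc n"]) auto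
  show ?thesis
  proof (rule that)
    fix U :: "'a set" and g :: "nat \<Rightarrow> 'a \<Rightarrow> real"
    assume U: "finite U" "N \<le> card U"
    define up where "up X = {i. i < h \<and> g i (Min X) \<le> g i (Max X)}" for X
    have up_ordered: "up {x, y} = {i. i < h \<and> g i x \<le> g i y}" if "x < y" for x y
      using that by (auto simp: up_def min_def max_def)
    have "up \<in> [U]\<^bsup>2\<^esup> \<rightarrow> Pow {..<h}"
      by (auto simp: up_def)
    then obtain H c where H: "H \<subseteq> U" "card H = Suc n" and hom: "up ` [H]\<^bsup>2\<^esup> \<subseteq> {c}"
      using N[OF U] by metis
    have up_pair: "up {x, y} = c" if "x \<in> H" "y \<in> H" "x \<noteq> y" for x y
      using hom that by (auto simp: image_subset_iff)
    have "finite H"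
      using H(1) U(1) by (rule finite_subset)
    have "H \<noteq> {}"
      using H(2) by auto
    define p where "p = Min H"
    have p: "p \<in> H" "\<And>x. x \<in> H \<Longrightarrow> p \<le> x"
      using \<open>finite H\<close> \<open>H \<noteq> {}\<close> by (simp_all add: p_def)
    have "dom_below h g p x y" if x: "x \<in> H - {p}" and y: "y \<in> H - {p}" and "x < y" for x y
    proof -
      have "p < x"
        using p x by force
      \<comment> \<open>By homogeneity, wherever x exceeds y it also lies below p.\<close>
      then have same_up: "{i. i < h \<and> g i p \<le> g i x} = {i. i < h \<and> g i x \<le> g i y}"
        using up_pair[of p x] up_pair[of x y] up_ordered[of p x] up_ordered[of x y] p(1) x y \<open>x < y\<close>
        by simp
      have "g i x \<le> max (g i p) (g i y)" if "i < h" for i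
      proof -
        have "g i p \<le> g i x \<longleftrightarrow> g i x \<le> g i y"
          using arg_cong[OF same_up, of "\<lambda>A. i \<in> A"] that by simp
        then show ?thesis
          unfolding le_max_iff_disj by linarith
      qed
      with \<open>p < x\<close> \<open>x < y\<close> show ?thesis
        by (simp add: dom_below_def dominated_def)
    qed
    then have "sorted_wrt (dom_below h g p) (sorted_list_of_set (H - {p}))"
      by (rule sorted_wrt_mono_rel[OF _ strict_sorted_list_of_set]) (use \<open>finite H\<close> in auto)
    moreover have "length (sorted_list_of_set (H - {p})) = n"
      using H(2) p(1) \<open>finite H\<close> by simp
    ultimately show "\<exists>p\<in>U. \<exists>xs. set xs \<subseteq> U \<and> sorted_wrt (dom_below h g p) xs \<and> length xs = n"
      using H(1) p(1) \<open>finite H\<close> by (intro bexI[of _ p] exI[of _ "sorted_list_of_set (H - {p})"]) auto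
  qed
qed

lemma every_colour_above_tall_point:
  fixes g :: "nat \<Rightarrow> 'a::linorder \<Rightarrow> real"
  assumes P: "finite P" "U \<subseteq> P" and closed: "dominance_closed h g P U"
    and pq: "p \<in> U" "q \<in> U" "p < q"
    and t: "2 \<le> t" and j: "j < k"
    and tall: "t + k - 2 \<le> chain_height (dom_below h g p) P q"
  shows "\<exists>T\<subseteq>U. card T = t \<and> tuple_colour h g P t k T = j"
proof -
  let ?ht = "chain_height (dom_below h g p) P"
  define J where "J = insert (t - 2 + j) {..<t - 2}"
  have "\<exists>r. (r = q \<or> r \<in> P \<and> dom_below h g p r q) \<and> ?ht r = i" if "i \<in> J" for i
  proof -
    have "i \<le> ?ht q"
      using that tall t j unfolding J_def by auto
    then show ?thesis
      using chain_height_attained_below[OF P(1) irreflp_dom_below transp_dom_below] by metis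
  qed
  then obtain pick where pick: "\<And>i. i \<in> J \<Longrightarrow>
      (pick i = q \<or> pick i \<in> P \<and> dom_below h g p (pick i) q) \<and> ?ht (pick i) = i"
    by metis
  have pick_U: "pick i \<in> U \<and> p < pick i" if "i \<in> J" for i
  proof (cases "pick i = q")
    case False
    then have "pick i \<in> P" "dom_below h g p (pick i) q"
      using pick[OF that] by auto
    then show ?thesis
      using closed pq unfolding dominance_closed_def dom_below_def by blast
  qed (use pq in auto)
  have inj: "inj_on pick J"
    by (rule inj_on_inverseI[of _ ?ht]) (use pick in simp)
  have heights: "?ht ` pick ` J = J"
  proof -
    have "(?ht \<circ> pick) ` J = id ` J"
      by (rule image_cong) (simp_all add: pick)
    then show ?thesis
      by (simp add: image_comp)
  qed
  have card_J: "card J = t - 1"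
    using t by (simp add: J_def)
  have max_J: "Max J = t - 2 + j"
    by (rule Max_eqI) (auto simp: J_def)
  define T where "T = insert p (pick ` J)"
  have p_notin: "p \<notin> pick ` J"
    using pick_U by fastforce
  have "T \<subseteq> U"
    using pick_U pq(1) by (auto simp: T_def)
  moreover have "card T = t"
    using p_notin card_image[OF inj] card_J t by (simp add: T_def J_def)
  moreover have "Min T = p"
    using pick_U by (intro Min_eqI) (auto simp: T_def J_def less_imp_le)
  moreover have "T - {p} = pick ` J"
    using p_notin by (auto simp: T_def)
  ultimately show ?thesis
    using heights max_J j by (intro exI[of _ T]) (simp add: tuple_colour_def)
qed

theorem dominance_closed_sets_contain_all_tuple_colours:
  fixes h t k :: nat
  assumes t: "2 \<le> t" and k: "1 \<le> k"
  obtains m where "\<And>P (g :: nat \<Rightarrow> 'a::linorder \<Rightarrow> real) U j. finite P \<Longrightarrow> U \<subseteq> P \<Longrightarrow>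
    dominance_closed h g P U \<Longrightarrow> m \<le> card U \<Longrightarrow> j < k \<Longrightarrow>
    \<exists>T\<subseteq>U. card T = t \<and> tuple_colour h g P t k T = j"
proof -
  obtain m where m: "\<And>(U :: 'a set) g. finite U \<Longrightarrow> m \<le> card U \<Longrightarrow>
      \<exists>p\<in>U. \<exists>xs. set xs \<subseteq> U \<and> sorted_wrt (dom_below h g p) xs \<and> length xs = t + k - 1"
    by (rule large_set_has_long_dom_below_chain[where h = h and n = "t + k - 1"]) blast
  show ?thesis
  proof (rule that)
    fix P U j and g :: "nat \<Rightarrow> 'a \<Rightarrow> real"
    assume P: "finite P" "U \<subseteq> P" and closed: "dominance_closed h g P U"
      and size: "m \<le> card U" and j: "j < k"
    obtain p xs where p: "p \<in> U" and xs: "set xs \<subseteq> U" "sorted_wrt (dom_below h g p) xs"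
      "length xs = t + k - 1"
      using m[OF finite_subset[OF P(2,1)] size] by metis
    have "xs \<noteq> []"
      using xs(3) t by auto
    define q where "q = last xs"
    have "q \<in> U"
      using xs(1) \<open>xs \<noteq> []\<close> unfolding q_def by auto
    have "dom_below h g p (xs ! 0) (xs ! (length xs - 1))"
      by (rule sorted_wrt_nth_less[OF xs(2)]) (use xs(3) t k in auto)
    then have "p < q"
      unfolding q_def last_conv_nth[OF \<open>xs \<noteq> []\<close>] dom_below_def by (meson order.strict_trans)
    have "length xs - 1 \<le> chain_height (dom_below h g p) P q"
      using chain_height_last_ge[OF P(1) irreflp_dom_below transp_dom_below] xs(1,2) P(2) \<open>xs \<noteq> []\<close>
      unfolding q_def by blast
    then have "t + k - 2 \<le> chain_height (dom_below h g p) P q"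
      using xs(3) by simp
    then show "\<exists>T\<subseteq>U. card T = t \<and> tuple_colour h g P t k T = j"
      using every_colour_above_tall_point[OF P closed p \<open>q \<in> U\<close> \<open>p < q\<close> t j] by blast
  qed
qed

lemma dominance_closed_image:
  assumes f: "inj_on f S" and U: "U \<subseteq> S" and closed: "dominance_closed h g S U"
  shows "dominance_closed h (\<lambda>i. g i \<circ> inv_into S f) (f ` S) (f ` U)"
  unfolding dominance_closed_def
proof (intro ballI impI)
  fix p' q' x'
  assume "p' \<in> f ` U" "q' \<in> f ` U" "x' \<in> f ` S"
    and dom: "dominated h (\<lambda>i. g i \<circ> inv_into S f) p' q' x'"
  then obtain p q x where pqx: "p \<in> U" "q \<in> U" "x \<in> S" "p' = f p" "q' = f q" "x' = f x"
    by blast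
  then have "dominated h g p q x"
    using dom f U by (auto simp: dominated_def inv_into_f_f subsetD)
  then show "x' \<in> f ` U"
    using closed pqx unfolding dominance_closed_def by blast
qed

theorem tuple_colouring_of_dominance_closed_sets:
  fixes h t k :: nat
  assumes t: "2 \<le> t" and k: "1 \<le> k"
  obtains m where "\<And>(S :: 'b set) g. finite S \<Longrightarrow> \<exists>c. (\<forall>T. c T < k) \<and>
    (\<forall>U\<subseteq>S. dominance_closed h g S U \<and> m \<le> card U \<longrightarrow> (\<forall>j<k. \<exists>T\<subseteq>U. card T = t \<and> c T = j))"
proof -
  obtain m where m: "\<And>P (g :: nat \<Rightarrow> nat \<Rightarrow> real) U j. finite P \<Longrightarrow> U \<subseteq> P \<Longrightarrow>
      dominance_closed h g P U \<Longrightarrow> m \<le> card U \<Longrightarrow> j < k \<Longrightarrow>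
      \<exists>T\<subseteq>U. card T = t \<and> tuple_colour h g P t k T = j"
    by (rule dominance_closed_sets_contain_all_tuple_colours[OF t k]) blast
  show ?thesis
  proof (rule that)
    fix S :: "'b set" and g :: "nat \<Rightarrow> 'b \<Rightarrow> real"
    assume S: "finite S"
    obtain f :: "'b \<Rightarrow> nat" where f: "inj_on f S"
      using finite_imp_inj_to_nat_seg[OF S] by blast
    define c where "c T = tuple_colour h (\<lambda>i. g i \<circ> inv_into S f) (f ` S) t k (f ` T)" for T
    have "\<exists>T\<subseteq>U. card T = t \<and> c T = j"
      if U: "U \<subseteq> S" "dominance_closed h g S U" "m \<le> card U" and j: "j < k" for U j
    proof -
      have "card (f ` U) = card U"
        using card_image inj_on_subset[OF f U(1)] by blast
      then obtain T' where T': "T' \<subseteq> f ` U" "card T' = t"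
        "tuple_colour h (\<lambda>i. g i \<circ> inv_into S f) (f ` S) t k T' = j"
        using m[OF finite_imageI[OF S] image_mono[OF U(1)] dominance_closed_image[OF f U(1,2)] _ j]
          U(3) by auto
      define T where "T = U \<inter> f -` T'"
      have "f ` T = T'"
        using T'(1) by (auto simp: T_def)
      moreover have "inj_on f T"
        using inj_on_subset[OF f] U(1) by (simp add: T_def le_infI1)
      ultimately have "card T = t"
        using T'(2) card_image by metis
      moreover have "T \<subseteq> U"
        by (simp add: T_def)
      ultimately show ?thesis
        using T'(3) \<open>f ` T = T'\<close> by (auto simp: c_def)
    qed
    moreover have "\<forall>T. c T < k"
      using k by (simp add: c_def tuple_colour_def)
    ultimately show "\<exists>c. (\<forall>T. c T < k) \<and>
        (\<forall>U\<subseteq>S. dominance_closed h g S U \<and> m \<le> card U \<longrightarrow> (\<forall>j<k. \<exists>T\<subseteq>U. card T = t \<and> c T = j))"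
      by blast
  qed
qed

section \<open>Regions of translated halfspaces\<close>

lemma dotd_translate: "dotd d a (\<lambda>i. x i + v i) = dotd d a x + dotd d a v"
  by (simp add: dotd_def distrib_left sum.distrib)

lemma translate_halfspace:
  assumes v: "v \<in> Rspace d"
  shows "translate v {x \<in> Rspace d. dotd d a x \<le> b} = {x \<in> Rspace d. dotd d a x \<le> b + dotd d a v}"
proof
  show "translate v {x \<in> Rspace d. dotd d a x \<le> b} \<subseteq> {x \<in> Rspace d. dotd d a x \<le> b + dotd d a v}"
    using v by (auto simp: translate_def dotd_translate Rspace_def)
next
  show "{x \<in> Rspace d. dotd d a x \<le> b + dotd d a v} \<subseteq> translate v {x \<in> Rspace d. dotd d a x \<le> b}"
  proof
    fix y assume y: "y \<in> {x \<in> Rspace d. dotd d a x \<le> b + dotd d a v}"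
    define x where "x = (\<lambda>i. y i - v i)"
    have y_eq: "y = (\<lambda>i. x i + v i)"
      by (simp add: x_def)
    have "x \<in> Rspace d"
      using y v by (simp add: x_def Rspace_def)
    moreover have "dotd d a x \<le> b"
      using y dotd_translate[of d a x v] by (simp flip: y_eq)
    ultimately show "y \<in> translate v {x \<in> Rspace d. dotd d a x \<le> b}"
      unfolding translate_def using y_eq by blast
  qed
qed

lemma region_dominance_closed:
  assumes Hs: "\<And>i. i < h \<Longrightarrow> Hs i = {x \<in> Rspace d. dotd d (a i) x \<le> b i}"
    and R: "is_region d h Hs R" and S: "S \<subseteq> Rspace d"
  shows "dominance_closed h (\<lambda>i. dotd d (a i)) S (R \<inter> S)"
  unfolding dominance_closed_def
proof (intro ballI impI)
  fix p q x
  assume p: "p \<in> R \<inter> S" and q: "q \<in> R \<inter> S" and x: "x \<in> S"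
    and dom: "dominated h (\<lambda>i. dotd d (a i)) p q x"
  obtain F where F: "R = \<Inter>F" "\<And>G. G \<in> F \<Longrightarrow> \<exists>i<h. \<exists>v\<in>Rspace d. G = translate v (Hs i)"
    using R unfolding is_region_def by blast
  have "x \<in> G" if G_F: "G \<in> F" for G
  proof -
    obtain i v where i: "i < h" "v \<in> Rspace d" "G = translate v (Hs i)"
      using F(2)[OF G_F] by blast
    then have G: "G = {y \<in> Rspace d. dotd d (a i) y \<le> b i + dotd d (a i) v}"
      using Hs translate_halfspace by simp
    have "p \<in> G" "q \<in> G"
      using p q F(1) G_F by auto
    moreover have "dotd d (a i) x \<le> max (dotd d (a i) p) (dotd d (a i) q)"
      using dom i(1) by (simp add: dominated_def)
    ultimately show "x \<in> G"
      using x S unfolding G by auto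
  qed
  then show "x \<in> R \<inter> S"
    using F(1) x by blast
qed

theorem theorem4:
  fixes t k h :: nat
  assumes "t \<ge> 2" and "k \<ge> 1" and "h \<ge> 1"
  shows "\<exists>m::nat. \<forall>d::nat. \<forall>Hs :: nat \<Rightarrow> (nat \<Rightarrow> real) set.
    (\<forall>i<h. is_halfspace d (Hs i)) \<longrightarrow>
    (\<forall>S. finite S \<and> S \<subseteq> Rspace d \<longrightarrow>
      (\<exists>c :: (nat \<Rightarrow> real) set \<Rightarrow> nat.
         (\<forall>T. T \<subseteq> S \<and> card T = t \<longrightarrow> c T < k) \<and>
         (\<forall>R. is_region d h Hs R \<and> card (R \<inter> S) \<ge> m \<longrightarrow>
            (\<forall>j<k. \<exists>T. T \<subseteq> R \<inter> S \<and> card T = t \<and> c T = j))))"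
proof -
  obtain m where m: "\<And>(S :: (nat \<Rightarrow> real) set) g. finite S \<Longrightarrow> \<exists>c. (\<forall>T. c T < k) \<and>
      (\<forall>U\<subseteq>S. dominance_closed h g S U \<and> m \<le> card U \<longrightarrow> (\<forall>j<k. \<exists>T\<subseteq>U. card T = t \<and> c T = j))"
    by (rule tuple_colouring_of_dominance_closed_sets[OF assms(1,2)]) blast
  show ?thesis
  proof (intro exI[of _ m] allI impI)
    fix d Hs S
    assume "\<forall>i<h. is_halfspace d (Hs i)" and S: "finite S \<and> S \<subseteq> Rspace d"
    then obtain a b where Hs: "\<And>i. i < h \<Longrightarrow> Hs i = {x \<in> Rspace d. dotd d (a i) x \<le> b i}"
      unfolding is_halfspace_def by metis
    obtain c where c: "\<forall>T. c T < k" and colours: "\<forall>U\<subseteq>S.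
        dominance_closed h (\<lambda>i. dotd d (a i)) S U \<and> m \<le> card U \<longrightarrow>
        (\<forall>j<k. \<exists>T\<subseteq>U. card T = t \<and> c T = j)"
      using m[of S "\<lambda>i. dotd d (a i)"] S by blast
    show "\<exists>c. (\<forall>T. T \<subseteq> S \<and> card T = t \<longrightarrow> c T < k) \<and>
        (\<forall>R. is_region d h Hs R \<and> m \<le> card (R \<inter> S) \<longrightarrow>
          (\<forall>j<k. \<exists>T. T \<subseteq> R \<inter> S \<and> card T = t \<and> c T = j))"
    proof (intro exI[of _ c] conjI allI impI)
      fix R j
      assume R: "is_region d h Hs R \<and> m \<le> card (R \<inter> S)" and j: "j < k"
      then have "dominance_closed h (\<lambda>i. dotd d (a i)) S (R \<inter> S)"
        using region_dominance_closed[where h = h and Hs = Hs and a = a and b = b] Hs S by blast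
      then show "\<exists>T. T \<subseteq> R \<inter> S \<and> card T = t \<and> c T = j"
        using colours R j by blast
    qed (use c in blast)
  qed
qed

end
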